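(* Let $G$ be a compact, totally disconnected group and $\alpha$ an automorphism of $G$. Then there is an inverse system $\{(G_i,\alpha_i),\varphi_{ij},\mathcal{I}\}$ of compact groups $G_i$ with automorphisms $\alpha_i$, indexed by a directed set $\mathcal{I}$, with bonding homomorphisms $\varphi_{ij}$ satisfying $\varphi_{ij}\circ\alpha_j=\alpha_i\circ\varphi_{ij}$, such that each pair $(G_i,\alpha_i)$ has finite depth and $(G,\alpha)\cong\varprojlim(G_i,\alpha_i)$, i.e. $G$ is isomorphic as a topological group to the inverse limit via an isomorphism intertwining $\alpha$ with the automorphism induced by the $\alpha_i$.
   Context: A pair $(K,\beta)$, with $K$ a compact group and $\beta$ an automorphism, has finite depth if there is an open subgroup $V\le K$ with $\bigcap_{k\in\mathbb{Z}}\beta^k(V)=\{1\}$. *)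

theory Defs
  imports "HOL-Analysis.Analysis" "HOL-Algebra.Group"
begin

definition topological_group :: "('a, 'b) monoid_scheme \<Rightarrow> 'a topology \<Rightarrow> bool" where
  "topological_group G T \<longleftrightarrow> group G \<and> topspace T = carrier G \<and>
     continuous_map (prod_topology T T) T (\<lambda>(x, y). x \<otimes>\<^bsub>G\<^esub> y) \<and>
     continuous_map T T (\<lambda>x. inv\<^bsub>G\<^esub> x)"

definition compact_group :: "('a, 'b) monoid_scheme \<Rightarrow> 'a topology \<Rightarrow> bool" where
  "compact_group G T \<longleftrightarrow> topological_group G T \<and> compact_space T \<and> Hausdorff_space T"

definition totally_disconnected_space :: "'a topology \<Rightarrow> bool" where
  "totally_disconnected_space T \<longleftrightarrow>
     (\<forall>x \<in> topspace T. connected_component_of_set T x = {x})"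

definition topgroup_automorphism :: "('a, 'b) monoid_scheme \<Rightarrow> 'a topology \<Rightarrow> ('a \<Rightarrow> 'a) \<Rightarrow> bool" where
  "topgroup_automorphism G T \<beta> \<longleftrightarrow> \<beta> \<in> iso G G \<and> homeomorphic_map T T \<beta>"

definition aut_power :: "('a, 'b) monoid_scheme \<Rightarrow> ('a \<Rightarrow> 'a) \<Rightarrow> int \<Rightarrow> 'a \<Rightarrow> 'a" where
  "aut_power G \<beta> k = (if 0 \<le> k then \<beta> ^^ nat k else (inv_into (carrier G) \<beta>) ^^ nat (- k))"

definition finite_depth :: "('a, 'b) monoid_scheme \<Rightarrow> 'a topology \<Rightarrow> ('a \<Rightarrow> 'a) \<Rightarrow> bool" where
  "finite_depth G T \<beta> \<longleftrightarrow>
     (\<exists>V. subgroup V G \<and> openin T V \<and> (\<Inter>k::int. aut_power G \<beta> k ` V) = {\<one>\<^bsub>G\<^esub>})"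

definition directed_set :: "'i set \<Rightarrow> ('i \<Rightarrow> 'i \<Rightarrow> bool) \<Rightarrow> bool" where
  "directed_set I rel \<longleftrightarrow> I \<noteq> {} \<and> (\<forall>i\<in>I. rel i i) \<and>
     (\<forall>i\<in>I. \<forall>j\<in>I. \<forall>k\<in>I. rel i j \<longrightarrow> rel j k \<longrightarrow> rel i k) \<and>
     (\<forall>i\<in>I. \<forall>j\<in>I. \<exists>k\<in>I. rel i k \<and> rel j k)"

definition inverse_system_aut ::
  "'i set \<Rightarrow> ('i \<Rightarrow> 'i \<Rightarrow> bool) \<Rightarrow> ('i \<Rightarrow> ('c, 'd) monoid_scheme) \<Rightarrow> ('i \<Rightarrow> 'c topology)
   \<Rightarrow> ('i \<Rightarrow> 'c \<Rightarrow> 'c) \<Rightarrow> ('i \<Rightarrow> 'i \<Rightarrow> 'c \<Rightarrow> 'c) \<Rightarrow> bool" where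
  "inverse_system_aut I rel Gs Ts \<alpha>s \<phi> \<longleftrightarrow>
     directed_set I rel \<and>
     (\<forall>i\<in>I. compact_group (Gs i) (Ts i) \<and> topgroup_automorphism (Gs i) (Ts i) (\<alpha>s i)) \<and>
     (\<forall>i\<in>I. \<forall>j\<in>I. rel i j \<longrightarrow>
        \<phi> i j \<in> hom (Gs j) (Gs i) \<and> continuous_map (Ts j) (Ts i) (\<phi> i j) \<and>
        (\<forall>x\<in>carrier (Gs j). \<phi> i j (\<alpha>s j x) = \<alpha>s i (\<phi> i j x))) \<and>
     (\<forall>i\<in>I. \<forall>x\<in>carrier (Gs i). \<phi> i i x = x) \<and>
     (\<forall>i\<in>I. \<forall>j\<in>I. \<forall>k\<in>I. rel i j \<longrightarrow> rel j k \<longrightarrow>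
        (\<forall>x\<in>carrier (Gs k). \<phi> i j (\<phi> j k x) = \<phi> i k x))"

definition inv_limit ::
  "'i set \<Rightarrow> ('i \<Rightarrow> 'i \<Rightarrow> bool) \<Rightarrow> ('i \<Rightarrow> ('c, 'd) monoid_scheme) \<Rightarrow> ('i \<Rightarrow> 'i \<Rightarrow> 'c \<Rightarrow> 'c)
   \<Rightarrow> ('i \<Rightarrow> 'c) monoid" where
  "inv_limit I rel Gs \<phi> =
     \<lparr> carrier = {f \<in> (\<Pi>\<^sub>E i\<in>I. carrier (Gs i)).
                   \<forall>i\<in>I. \<forall>j\<in>I. rel i j \<longrightarrow> \<phi> i j (f j) = f i},
       mult = (\<lambda>f g. \<lambda>i\<in>I. f i \<otimes>\<^bsub>Gs i\<^esub> g i),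
       one = (\<lambda>i\<in>I. \<one>\<^bsub>Gs i\<^esub>) \<rparr>"

definition inv_limit_topology ::
  "'i set \<Rightarrow> ('i \<Rightarrow> 'i \<Rightarrow> bool) \<Rightarrow> ('i \<Rightarrow> ('c, 'd) monoid_scheme) \<Rightarrow> ('i \<Rightarrow> 'c topology)
   \<Rightarrow> ('i \<Rightarrow> 'i \<Rightarrow> 'c \<Rightarrow> 'c) \<Rightarrow> ('i \<Rightarrow> 'c) topology" where
  "inv_limit_topology I rel Gs Ts \<phi> =
     subtopology (product_topology Ts I) (carrier (inv_limit I rel Gs \<phi>))"

definition inv_limit_aut :: "'i set \<Rightarrow> ('i \<Rightarrow> 'c \<Rightarrow> 'c) \<Rightarrow> ('i \<Rightarrow> 'c) \<Rightarrow> ('i \<Rightarrow> 'c)" where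
  "inv_limit_aut I \<alpha>s f = (\<lambda>i\<in>I. \<alpha>s i (f i))"

end

theory Submission
  imports Defs "HOL-Algebra.Coset"
begin

text \<open>For an open normal subgroup \<open>U\<close> of \<open>G\<close> let \<open>N\<^sub>U = \<Inter>\<^sub>k \<alpha>\<^sup>k(U)\<close>. It is a closed
  normal \<open>\<alpha>\<close>-invariant subgroup, so \<open>\<alpha>\<close> induces an automorphism of the compact group
  \<open>G/N\<^sub>U\<close>, and the image of \<open>U\<close> is an open subgroup whose \<open>\<alpha>\<close>-translates meet only in the
  identity: \<open>(G/N\<^sub>U, \<alpha>)\<close> has finite depth. The \<open>N\<^sub>U\<close> are directed under reverse inclusion.
  In a compact totally disconnected group the open subgroups, hence the \<open>N\<^sub>U\<close>, separate
  points, so \<open>G \<rightarrow> lim G/N\<^sub>U\<close> is injective; it is onto because the cosets forming a thread are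
  closed and directed, so they have a common point by compactness; and a continuous bijection
  from a compact space onto a Hausdorff space is a homeomorphism.\<close>

definition final_topology :: "'a topology \<Rightarrow> ('a \<Rightarrow> 'b) \<Rightarrow> 'b topology" where
  "final_topology X f =
     topology (\<lambda>W. W \<subseteq> f ` topspace X \<and> openin X {x \<in> topspace X. f x \<in> W})"

lemma openin_final_topology:
  "openin (final_topology X f) W \<longleftrightarrow> W \<subseteq> f ` topspace X \<and> openin X {x \<in> topspace X. f x \<in> W}"
proof -
  have "istopology (\<lambda>W. W \<subseteq> f ` topspace X \<and> openin X {x \<in> topspace X. f x \<in> W})"
    unfolding istopology_def
  proof (rule conjI; intro allI impI)
    fix S S'
    assume "S \<subseteq> f ` topspace X \<and> openin X {x \<in> topspace X. f x \<in> S}"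
      and "S' \<subseteq> f ` topspace X \<and> openin X {x \<in> topspace X. f x \<in> S'}"
    moreover have "{x \<in> topspace X. f x \<in> S \<inter> S'} =
        {x \<in> topspace X. f x \<in> S} \<inter> {x \<in> topspace X. f x \<in> S'}"
      by auto
    ultimately show "S \<inter> S' \<subseteq> f ` topspace X \<and> openin X {x \<in> topspace X. f x \<in> S \<inter> S'}"
      by auto
  next
    fix K assume K: "\<forall>S\<in>K. S \<subseteq> f ` topspace X \<and> openin X {x \<in> topspace X. f x \<in> S}"
    have "{x \<in> topspace X. f x \<in> \<Union>K} = (\<Union>S\<in>K. {x \<in> topspace X. f x \<in> S})"
      by auto
    then show "\<Union>K \<subseteq> f ` topspace X \<and> openin X {x \<in> topspace X. f x \<in> \<Union>K}"
      using K by auto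
  qed
  then show ?thesis
    unfolding final_topology_def by simp
qed

lemma topspace_final_topology: "topspace (final_topology X f) = f ` topspace X"
proof
  show "topspace (final_topology X f) \<subseteq> f ` topspace X"
    using openin_topspace[of "final_topology X f", unfolded openin_final_topology] by (rule conjunct1)
  have "{x \<in> topspace X. f x \<in> f ` topspace X} = topspace X"
    by auto
  then have "openin (final_topology X f) (f ` topspace X)"
    by (simp add: openin_final_topology)
  then show "f ` topspace X \<subseteq> topspace (final_topology X f)"
    by (rule openin_subset)
qed

lemma quotient_map_final_topology: "quotient_map X (final_topology X f) f"
  unfolding quotient_map_def by (simp add: topspace_final_topology openin_final_topology)

lemma open_map_prod_map:
  assumes f: "open_map X X' f" and g: "open_map Y Y' g"
  shows "open_map (prod_topology X Y) (prod_topology X' Y') (\<lambda>(x, y). (f x, g y))"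
  unfolding open_map_def
proof (intro allI impI)
  fix W assume W: "openin (prod_topology X Y) W"
  show "openin (prod_topology X' Y') ((\<lambda>(x, y). (f x, g y)) ` W)"
    unfolding openin_prod_topology_alt
  proof (intro allI impI)
    fix x' y' assume "(x', y') \<in> (\<lambda>(x, y). (f x, g y)) ` W"
    then obtain x y where xy: "(x, y) \<in> W" "x' = f x" "y' = g y"
      by force
    then obtain U V where UV: "openin X U" "openin Y V" "x \<in> U" "y \<in> V" "U \<times> V \<subseteq> W"
      using W[unfolded openin_prod_topology_alt, rule_format, OF xy(1)] by blast
    have "openin X' (f ` U)" "openin Y' (g ` V)"
      using f g UV(1,2) unfolding open_map_def by blast+
    moreover have "f ` U \<times> g ` V \<subseteq> (\<lambda>(x, y). (f x, g y)) ` W"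
      using UV(5) by auto
    ultimately show "\<exists>U' V'. openin X' U' \<and> openin Y' V' \<and> x' \<in> U' \<and> y' \<in> V' \<and>
                 U' \<times> V' \<subseteq> (\<lambda>(x, y). (f x, g y)) ` W"
      using UV(3,4) xy by blast
  qed
qed

lemma homeomorphic_maps_inv_into:
  assumes "homeomorphic_map X Y f"
  shows "homeomorphic_maps X Y f (inv_into (topspace X) f)"
proof -
  obtain g where g: "homeomorphic_maps X Y f g"
    using assms homeomorphic_map_maps by blast
  have inv: "g y = inv_into (topspace X) f y" if "y \<in> topspace Y" for y
    using g that homeomorphic_imp_injective_map[OF assms]
    by (intro inv_into_f_eq[symmetric]) (auto simp: homeomorphic_maps_def continuous_map_def)
  show ?thesis
    by (intro homeomorphic_maps_eq[OF g]) (use inv in auto)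
qed

lemma clopen_separating_points:
  assumes X: "compact_space X" "Hausdorff_space X" "totally_disconnected_space X"
    and xy: "x \<in> topspace X" "y \<in> topspace X" "x \<noteq> y"
  shows "\<exists>C. closedin X C \<and> openin X C \<and> x \<in> C \<and> y \<notin> C"
proof -
  let ?Q = "quasi_component_of_set X x"
  have "?Q \<in> quasi_components_of X"
    using xy(1) quasi_component_in_quasi_components_of by fastforce
  moreover have "compactin X ?Q"
    using closedin_compact_space[OF X(1) closedin_quasi_component_of] .
  ultimately have "?Q \<in> connected_components_of X"
    using compact_quasi_eq_connected_components_of[OF compact_imp_locally_compact_space X(2)] X(1)
    by blast
  then obtain z where z: "z \<in> topspace X" "?Q = connected_component_of_set X z"
    unfolding connected_components_of_def by blast
  have "connected_component_of X z x"
    using xy(1) z(2) quasi_component_of_refl by (metis mem_Collect_eq)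
  then have "?Q = {x}"
    using X(3) z connected_component_of_equiv xy(1)
    unfolding totally_disconnected_space_def by metis
  then have "\<not> quasi_component_of X x y"
    using xy(3) by (metis mem_Collect_eq singletonD)
  then show ?thesis
    using xy quasi_component_of[of X x y] by blast
qed

lemma compact_space_Inter_directed_closedin:
  assumes X: "compact_space X"
    and closed: "\<And>C. C \<in> \<F> \<Longrightarrow> closedin X C" and nonempty: "\<And>C. C \<in> \<F> \<Longrightarrow> C \<noteq> {}"
    and directed: "\<And>C D. C \<in> \<F> \<Longrightarrow> D \<in> \<F> \<Longrightarrow> \<exists>E\<in>\<F>. E \<subseteq> C \<inter> D"
  shows "\<Inter>\<F> \<noteq> {}"
proof -
  have lower_bound: "\<exists>E\<in>\<F>. E \<subseteq> \<Inter>\<F>'" if "finite \<F>'" "\<F>' \<noteq> {}" "\<F>' \<subseteq> \<F>" for \<F>'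
    using that
  proof (induction \<F>' rule: finite_ne_induct)
    case (singleton C)
    then show ?case
      by blast
  next
    case (insert C \<F>')
    then obtain E where E: "E \<in> \<F>" "E \<subseteq> \<Inter>\<F>'"
      by blast
    obtain E' where E': "E' \<in> \<F>" "E' \<subseteq> C \<inter> E"
      using directed[of C E] insert.prems E(1) by blast
    then have "E' \<subseteq> \<Inter>(insert C \<F>')"
      using E(2) by auto
    with E'(1) show ?case
      by blast
  qed
  have fip: "\<Inter>\<F>' \<noteq> {}" if F': "finite \<F>'" "\<F>' \<subseteq> \<F>" for \<F>'
  proof (cases "\<F>' = {}")
    case False
    then obtain E where "E \<in> \<F>" "E \<subseteq> \<Inter>\<F>'"
      using lower_bound[OF F'(1) False F'(2)] by blast
    then show ?thesis
      using nonempty by auto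
  qed simp
  show ?thesis
    by (rule compact_space_fip[THEN iffD1, OF X, THEN spec, THEN mp]) (use closed fip in auto)
qed

lemma funpow_intertwine:
  assumes hq: "\<And>x. x \<in> A \<Longrightarrow> h (q x) = q (f x)" and f: "\<And>x. x \<in> A \<Longrightarrow> f x \<in> A"
    and x: "x \<in> A"
  shows "(h ^^ n) (q x) = q ((f ^^ n) x) \<and> (f ^^ n) x \<in> A"
proof (induction n)
  case (Suc n)
  then show ?case
    using hq f by simp
qed (simp add: x)

lemma (in group) inv_mult_cancel [simp]:
  "x \<in> carrier G \<Longrightarrow> y \<in> carrier G \<Longrightarrow> inv x \<otimes> (x \<otimes> y) = y"
  by (simp add: m_assoc[symmetric])

lemma (in group) mult_inv_cancel [simp]:
  "x \<in> carrier G \<Longrightarrow> y \<in> carrier G \<Longrightarrow> x \<otimes> (inv x \<otimes> y) = y"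
  by (simp add: m_assoc[symmetric])

lemma (in group) rcos_eq_iff:
  assumes N: "subgroup N G" and x: "x \<in> carrier G" and y: "y \<in> carrier G"
  shows "N #> x = N #> y \<longleftrightarrow> x \<otimes> inv y \<in> N"
proof
  assume "N #> x = N #> y"
  then have "x \<in> N #> y"
    using rcos_self[OF x N] by simp
  then show "x \<otimes> inv y \<in> N"
    using subgroup.rcos_module_imp[OF N is_group y] by blast
next
  assume "x \<otimes> inv y \<in> N"
  then have "x \<in> N #> y"
    using subgroup.rcos_module_rev[OF N is_group y x] by blast
  then show "N #> x = N #> y"
    using repr_independence[OF _ y N] by simp
qed

lemma (in group) rcos_eq_preimage:
  assumes N: "subgroup N G" and r: "r \<in> carrier G"
  shows "N #> r = {x \<in> carrier G. x \<otimes> inv r \<in> N}"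
  using subgroup.rcos_module[OF N is_group r] subgroup.elemrcos_carrier[OF N is_group r] by blast

lemma (in group_hom) subgroup_vimage:
  assumes "subgroup K H"
  shows "subgroup {x \<in> carrier G. h x \<in> K} G"
  by (rule G.subgroupI)
    (use subgroup.one_closed[OF assms] subgroup.m_closed[OF assms] subgroup.m_inv_closed[OF assms]
      in auto)

lemma (in group) image_rcos_hom:
  assumes "f \<in> hom G H" "N \<subseteq> carrier G" "x \<in> carrier G"
  shows "f ` (N #> x) = f ` N #>\<^bsub>H\<^esub> f x"
  using set_mult_hom[OF assms(1,2), of "{x}"] assms(3) by (simp add: r_coset_eq_set_mult)

lemma (in group) set_mult_rcos_subgroup:
  assumes M: "subgroup M G" and N: "subgroup N G" and "M \<subseteq> N" and x: "x \<in> carrier G"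
  shows "N <#> (M #> x) = N #> x"
proof -
  have "N <#> M \<subseteq> N <#> N"
    using \<open>M \<subseteq> N\<close> by (rule mono_set_mult[OF subset_refl])
  moreover have "N \<subseteq> N <#> M"
  proof
    fix n assume n: "n \<in> N"
    then have "n \<otimes> \<one> \<in> N <#> M"
      using subgroup.one_closed[OF M] unfolding set_mult_def by blast
    then show "n \<in> N <#> M"
      using subgroup.mem_carrier[OF N n] by simp
  qed
  ultimately have "N <#> M = N"
    using subgroup_mult_id[OF N] by blast
  then show ?thesis
    using setmult_rcos_assoc[OF subgroup.subset[OF N] subgroup.subset[OF M] x] by simp
qed

lemma (in group) set_mult_FactGroup_hom:
  assumes M: "M \<lhd> G" and N: "N \<lhd> G" and MN: "M \<subseteq> N"
  shows "(\<lambda>C. N <#> C) \<in> hom (G Mod M) (G Mod N)"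
  unfolding hom_def
proof (intro CollectI conjI ballI)
  have rcos: "N <#> (M #> x) = N #> x" if "x \<in> carrier G" for x
    using set_mult_rcos_subgroup[OF normal_imp_subgroup[OF M] normal_imp_subgroup[OF N] MN that] .
  then show "(\<lambda>C. N <#> C) \<in> carrier (G Mod M) \<rightarrow> carrier (G Mod N)"
    by (auto simp: carrier_FactGroup)
  fix C D assume "C \<in> carrier (G Mod M)" "D \<in> carrier (G Mod M)"
  then obtain x y where xy: "x \<in> carrier G" "y \<in> carrier G" "C = M #> x" "D = M #> y"
    by (auto simp: carrier_FactGroup)
  then show "N <#> (C \<otimes>\<^bsub>G Mod M\<^esub> D) = (N <#> C) \<otimes>\<^bsub>G Mod N\<^esub> (N <#> D)"
    using rcos normal.rcos_sum[OF M] normal.rcos_sum[OF N] by simp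
qed

lemma (in group) image_FactGroup_hom:
  assumes f: "f \<in> hom G G" and N: "N \<lhd> G" and fN: "f ` N = N"
  shows "(\<lambda>C. f ` C) \<in> hom (G Mod N) (G Mod N)"
  unfolding hom_def
proof (intro CollectI conjI ballI)
  have Nc: "N \<subseteq> carrier G"
    using N normal_imp_subgroup subgroup.subset by blast
  show "(\<lambda>C. f ` C) \<in> carrier (G Mod N) \<rightarrow> carrier (G Mod N)"
    using image_rcos_hom[OF f Nc] fN hom_in_carrier[OF f] by (auto simp: carrier_FactGroup)
  fix C D assume "C \<in> carrier (G Mod N)" "D \<in> carrier (G Mod N)"
  then show "f ` (C \<otimes>\<^bsub>G Mod N\<^esub> D) = f ` C \<otimes>\<^bsub>G Mod N\<^esub> f ` D"
    using set_mult_hom[OF f] subgroup.rcosets_carrier[OF normal_imp_subgroup[OF N] is_group]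
    by (simp add: FactGroup_def)
qed

lemma (in group) subgroup_rcos_stabilizer:
  assumes C: "C \<subseteq> carrier G"
  shows "subgroup {x \<in> carrier G. C #> x = C} G"
proof (rule subgroupI)
  show "{x \<in> carrier G. C #> x = C} \<subseteq> carrier G" "{x \<in> carrier G. C #> x = C} \<noteq> {}"
    using C by auto
next
  fix x assume "x \<in> {x \<in> carrier G. C #> x = C}"
  then have x: "x \<in> carrier G" "C #> x = C"
    by auto
  then have "C #> inv x = (C #> x) #> inv x"
    by simp
  also have "\<dots> = C"
    using x(1) C by (simp add: coset_mult_assoc)
  finally show "inv x \<in> {x \<in> carrier G. C #> x = C}"
    using x by simp
next
  fix x y assume "x \<in> {x \<in> carrier G. C #> x = C}" "y \<in> {x \<in> carrier G. C #> x = C}"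
  then show "x \<otimes> y \<in> {x \<in> carrier G. C #> x = C}"
    using C by (simp add: coset_mult_assoc[symmetric])
qed

definition (in group) normal_core :: "'a set \<Rightarrow> 'a set" where
  "normal_core H = {x \<in> carrier G. \<forall>g\<in>carrier G. g \<otimes> x \<otimes> inv g \<in> H}"

lemma (in group) normal_core_subset:
  assumes "subgroup H G"
  shows "normal_core H \<subseteq> H"
proof
  fix x assume "x \<in> normal_core H"
  then have "x \<in> carrier G" "\<one> \<otimes> x \<otimes> inv \<one> \<in> H"
    unfolding normal_core_def using one_closed by blast+
  then show "x \<in> H"
    by simp
qed

lemma (in group) normal_core_normal:
  assumes H: "subgroup H G"
  shows "normal_core H \<lhd> G"
  unfolding normal_inv_iff
proof (intro conjI ballI)
  show "subgroup (normal_core H) G"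
  proof (rule subgroupI)
    show "normal_core H \<subseteq> carrier G" "normal_core H \<noteq> {}"
      using subgroup.one_closed[OF H] by (auto simp: normal_core_def)
  next
    fix x assume x: "x \<in> normal_core H"
    have "g \<otimes> inv x \<otimes> inv g = inv (g \<otimes> x \<otimes> inv g)" if "g \<in> carrier G" for g
      using that x by (simp add: normal_core_def m_assoc inv_mult_group)
    then show "inv x \<in> normal_core H"
      using x subgroup.m_inv_closed[OF H] by (auto simp: normal_core_def)
  next
    fix x y assume x: "x \<in> normal_core H" and y: "y \<in> normal_core H"
    have "g \<otimes> (x \<otimes> y) \<otimes> inv g = (g \<otimes> x \<otimes> inv g) \<otimes> (g \<otimes> y \<otimes> inv g)"
      if "g \<in> carrier G" for g
      using that x y by (simp add: normal_core_def m_assoc)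
    then show "x \<otimes> y \<in> normal_core H"
      using x y subgroup.m_closed[OF H] by (auto simp: normal_core_def)
  qed
next
  fix x h assume x: "x \<in> carrier G" and h: "h \<in> normal_core H"
  have "g \<otimes> (x \<otimes> h \<otimes> inv x) \<otimes> inv g = (g \<otimes> x) \<otimes> h \<otimes> inv (g \<otimes> x)"
    if "g \<in> carrier G" for g
    using that x h by (simp add: normal_core_def m_assoc inv_mult_group)
  then show "x \<otimes> h \<otimes> inv x \<in> normal_core H"
    using x h by (auto simp: normal_core_def)
qed

text \<open>Conjugates by elements of one coset \<open>H #> r\<close> agree modulo \<open>H\<close>, so finitely many
  cosets covering \<open>G\<close> give finitely many conditions.\<close>

lemma (in group) normal_core_eq_Inter:
  assumes H: "subgroup H G" and R: "R \<subseteq> carrier G" and cover: "carrier G \<subseteq> (\<Union>r\<in>R. H #> r)"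
  shows "normal_core H = carrier G \<inter> (\<Inter>r\<in>R. {x \<in> carrier G. r \<otimes> x \<otimes> inv r \<in> H})"
proof (intro equalityI subsetI)
  fix x assume "x \<in> normal_core H"
  then show "x \<in> carrier G \<inter> (\<Inter>r\<in>R. {x \<in> carrier G. r \<otimes> x \<otimes> inv r \<in> H})"
    using R by (auto simp: normal_core_def)
next
  fix x assume "x \<in> carrier G \<inter> (\<Inter>r\<in>R. {x \<in> carrier G. r \<otimes> x \<otimes> inv r \<in> H})"
  then have x: "x \<in> carrier G" and xR: "\<And>r. r \<in> R \<Longrightarrow> r \<otimes> x \<otimes> inv r \<in> H"
    by auto
  have "g \<otimes> x \<otimes> inv g \<in> H" if g: "g \<in> carrier G" for g
  proof -
    obtain r where r: "r \<in> R" "g \<in> H #> r"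
      using cover g by blast
    have rc: "r \<in> carrier G"
      using r(1) R by blast
    have h: "g \<otimes> inv r \<in> H"
      using subgroup.rcos_module_imp[OF H is_group rc r(2)] .
    have "g \<otimes> x \<otimes> inv g = (g \<otimes> inv r) \<otimes> (r \<otimes> x \<otimes> inv r) \<otimes> inv (g \<otimes> inv r)"
      using g rc x by (simp add: m_assoc inv_mult_group)
    then show ?thesis
      using h xR[OF r(1)] subgroup.m_closed[OF H] subgroup.m_inv_closed[OF H] by simp
  qed
  then show "x \<in> normal_core H"
    using x by (simp add: normal_core_def)
qed

lemma funpow_iso: "f \<in> iso G G \<Longrightarrow> f ^^ n \<in> iso G G"
  by (induction n) (simp_all add: id_def iso_set_refl iso_set_trans)

lemma (in group) aut_power_iso:
  assumes "f \<in> iso G G"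
  shows "aut_power G f k \<in> iso G G"
  using funpow_iso[OF assms] funpow_iso[OF iso_set_sym[OF assms]] by (simp add: aut_power_def)

lemma (in group) aut_power_succ:
  assumes f: "f \<in> iso G G" and x: "x \<in> carrier G"
  shows "aut_power G f (k + 1) x = f (aut_power G f k x)"
proof -
  have inv: "f (inv_into (carrier G) f y) = y" if "y \<in> carrier G" for y
    using f that by (simp add: iso_def bij_betw_def f_inv_into_f)
  consider "k \<ge> 0" | "k = -1" | "k < -1"
    by linarith
  then show ?thesis
  proof cases
    case 1
    then have "nat (k + 1) = Suc (nat k)"
      by simp
    with 1 show ?thesis
      by (simp add: aut_power_def)
  next
    case 2
    then show ?thesis
      using x inv by (simp add: aut_power_def)
  next
    case 3
    then have "nat (- k) = Suc (nat (- (k + 1)))"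
      by simp
    moreover have "aut_power G f (k + 1) x \<in> carrier G"
      using hom_in_carrier[OF iso_imp_homomorphism[OF aut_power_iso[OF f]] x] .
    ultimately show ?thesis
      using 3 inv by (simp add: aut_power_def)
  qed
qed

lemma (in group) aut_power_pred:
  assumes f: "f \<in> iso G G" and x: "x \<in> carrier G"
  shows "aut_power G f (k - 1) x = inv_into (carrier G) f (aut_power G f k x)"
proof -
  have "aut_power G f (k - 1) x \<in> carrier G"
    using hom_in_carrier[OF iso_imp_homomorphism[OF aut_power_iso[OF f]] x] .
  moreover have "inj_on f (carrier G)"
    using f by (simp add: iso_def bij_betw_def)
  ultimately show ?thesis
    using aut_power_succ[OF f x, of "k - 1"] by simp
qed

lemma (in group) aut_power_add:
  assumes f: "f \<in> iso G G" and x: "x \<in> carrier G"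
  shows "aut_power G f j (aut_power G f k x) = aut_power G f (j + k) x"
proof (induction j rule: int_induct[where k = 0])
  case base
  then show ?case
    by (simp add: aut_power_def)
next
  case (step1 i)
  have y: "aut_power G f k x \<in> carrier G"
    using hom_in_carrier[OF iso_imp_homomorphism[OF aut_power_iso[OF f]] x] .
  have "aut_power G f (i + 1) (aut_power G f k x) = f (aut_power G f i (aut_power G f k x))"
    by (rule aut_power_succ[OF f y])
  also have "\<dots> = f (aut_power G f (i + k) x)"
    by (simp only: step1.IH)
  also have "\<dots> = aut_power G f (i + k + 1) x"
    by (rule aut_power_succ[OF f x, symmetric])
  finally show ?case
    by (simp add: algebra_simps)
next
  case (step2 i)
  have y: "aut_power G f k x \<in> carrier G"
    using hom_in_carrier[OF iso_imp_homomorphism[OF aut_power_iso[OF f]] x] .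
  have "aut_power G f (i - 1) (aut_power G f k x) =
      inv_into (carrier G) f (aut_power G f i (aut_power G f k x))"
    by (rule aut_power_pred[OF f y])
  also have "\<dots> = inv_into (carrier G) f (aut_power G f (i + k) x)"
    by (simp only: step2.IH)
  also have "\<dots> = aut_power G f (i + k - 1) x"
    by (rule aut_power_pred[OF f x, symmetric])
  finally show ?case
    by (simp add: algebra_simps)
qed

lemma (in group) aut_power_FactGroup:
  assumes f: "f \<in> iso G G" and N: "N \<lhd> G" and fN: "f ` N = N" and x: "x \<in> carrier G"
  shows "aut_power (G Mod N) (\<lambda>C. f ` C) k (N #> x) = N #> aut_power G f k x"
proof -
  define g where "g = inv_into (carrier G) f"
  have Nc: "N \<subseteq> carrier G"
    using N normal_imp_subgroup subgroup.subset by blast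
  have f_inj: "inj_on f (carrier G)" and f_hom: "f \<in> hom G G"
    using f by (simp_all add: iso_def bij_betw_def)
  have g_hom: "g \<in> hom G G"
    using iso_set_sym[OF f] by (simp add: g_def iso_def)
  have f_rcos: "f ` (N #> y) = N #> f y" if "y \<in> carrier G" for y
    using image_rcos_hom[OF f_hom Nc that] fN by simp
  have inj: "inj_on (\<lambda>C. f ` C) (carrier (G Mod N))"
    using inj_on_image_eq_iff[OF f_inj] subgroup.rcosets_carrier[OF normal_imp_subgroup[OF N] is_group]
    by (auto simp: inj_on_def FactGroup_def)
  have inv: "inv_into (carrier (G Mod N)) (\<lambda>C. f ` C) (N #> y) = N #> g y" if y: "y \<in> carrier G" for y
  proof (rule inv_into_f_eq[OF inj])
    have gy: "g y \<in> carrier G"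
      using hom_in_carrier[OF g_hom y] .
    then show "N #> g y \<in> carrier (G Mod N)"
      by (simp add: carrier_FactGroup)
    show "f ` (N #> g y) = N #> y"
      using f_rcos[OF gy] f y by (simp add: g_def iso_def bij_betw_def f_inv_into_f)
  qed
  have "((\<lambda>C. f ` C) ^^ n) (N #> x) = N #> (f ^^ n) x" for n
    using funpow_intertwine[of "carrier G" "\<lambda>C. f ` C" "\<lambda>x. N #> x" f] f_rcos
      hom_in_carrier[OF f_hom] x by blast
  moreover have "(inv_into (carrier (G Mod N)) (\<lambda>C. f ` C) ^^ n) (N #> x) = N #> (g ^^ n) x" for n
    using funpow_intertwine[of "carrier G" "inv_into (carrier (G Mod N)) (\<lambda>C. f ` C)" "\<lambda>x. N #> x" g]
      inv hom_in_carrier[OF g_hom] x by blast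
  ultimately show ?thesis
    by (simp add: aut_power_def g_def)
qed

section \<open>Topological groups and their coset spaces\<close>

locale topgroup = group G for G :: "('a, 'b) monoid_scheme" (structure) +
  fixes T :: "'a topology"
  assumes topological_group: "topological_group G T"
begin

lemma topspace_eq [simp]: "topspace T = carrier G"
  using topological_group by (simp add: topological_group_def)

lemma continuous_map_mult: "continuous_map (prod_topology T T) T (\<lambda>(x, y). x \<otimes> y)"
  using topological_group by (simp add: topological_group_def)

lemma continuous_map_inv: "continuous_map T T (\<lambda>x. inv x)"
  using topological_group by (simp add: topological_group_def)

lemma continuous_map_mult_left: "a \<in> carrier G \<Longrightarrow> continuous_map T T (\<lambda>x. a \<otimes> x)"
  using continuous_map_compose[OF continuous_map_pairedI[OF continuous_map_const[THEN iffD2]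
        continuous_map_id] continuous_map_mult]
  by (simp add: o_def id_def)

lemma continuous_map_mult_right: "a \<in> carrier G \<Longrightarrow> continuous_map T T (\<lambda>x. x \<otimes> a)"
  using continuous_map_compose[OF continuous_map_pairedI[OF continuous_map_id
        continuous_map_const[THEN iffD2]] continuous_map_mult]
  by (simp add: o_def id_def)

lemma openin_carrier_preimage:
  "continuous_map T T f \<Longrightarrow> openin T S \<Longrightarrow> openin T {x \<in> carrier G. f x \<in> S}"
  using openin_continuous_map_preimage[of T T f S] by simp

lemma closedin_carrier_preimage:
  "continuous_map T T f \<Longrightarrow> closedin T S \<Longrightarrow> closedin T {x \<in> carrier G. f x \<in> S}"
  using closedin_continuous_map_preimage[of T T f S] by simp

lemma openin_rcos:
  assumes "subgroup H G" "openin T H" "r \<in> carrier G"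
  shows "openin T (H #> r)"
  using openin_carrier_preimage[OF continuous_map_mult_right[of "inv r"] assms(2)] assms
  by (simp add: rcos_eq_preimage)

lemma closedin_rcos:
  assumes "subgroup H G" "closedin T H" "r \<in> carrier G"
  shows "closedin T (H #> r)"
  using closedin_carrier_preimage[OF continuous_map_mult_right[of "inv r"] assms(2)] assms
  by (simp add: rcos_eq_preimage)

lemma openin_subgroup_neighbourhood:
  assumes H: "subgroup H G" and W: "openin T W" "\<one> \<in> W" "W \<subseteq> H"
  shows "openin T H"
proof -
  have "H = (\<Union>h\<in>H. {x \<in> carrier G. x \<otimes> inv h \<in> W})"
  proof (intro equalityI subsetI)
    fix x assume x: "x \<in> H"
    then have "x \<otimes> inv x \<in> W"
      using W(2) subgroup.mem_carrier[OF H] by simp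
    then show "x \<in> (\<Union>h\<in>H. {x \<in> carrier G. x \<otimes> inv h \<in> W})"
      using x subgroup.mem_carrier[OF H] by blast
  next
    fix x assume "x \<in> (\<Union>h\<in>H. {x \<in> carrier G. x \<otimes> inv h \<in> W})"
    then obtain h where h: "h \<in> H" and x: "x \<in> carrier G" "x \<otimes> inv h \<in> W"
      by blast
    then have "(x \<otimes> inv h) \<otimes> h \<in> H"
      using W(3) subgroup.m_closed[OF H] by blast
    then show "x \<in> H"
      using x h subgroup.mem_carrier[OF H] by (simp add: m_assoc)
  qed
  moreover have "openin T {x \<in> carrier G. x \<otimes> inv h \<in> W}" if "h \<in> H" for h
    using subgroup.mem_carrier[OF H that]
    by (intro openin_carrier_preimage[OF continuous_map_mult_right W(1)]) simp
  then have "openin T (\<Union>h\<in>H. {x \<in> carrier G. x \<otimes> inv h \<in> W})"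
    by blast
  ultimately show ?thesis
    by simp
qed

lemma closedin_open_subgroup:
  assumes H: "subgroup H G" "openin T H"
  shows "closedin T H"
proof -
  have "carrier G - H = (\<Union>r\<in>carrier G - H. H #> r)"
  proof (intro equalityI subsetI)
    fix x assume "x \<in> carrier G - H"
    then show "x \<in> (\<Union>r\<in>carrier G - H. H #> r)"
      using rcos_self[OF _ H(1)] by blast
  next
    fix x assume "x \<in> (\<Union>r\<in>carrier G - H. H #> r)"
    then obtain r where r: "r \<in> carrier G" "r \<notin> H" "x \<in> H #> r"
      by blast
    then have "x \<in> carrier G"
      using subgroup.elemrcos_carrier[OF H(1) is_group] by blast
    moreover have "x \<notin> H"
    proof
      assume "x \<in> H"
      then have "H #> r = H"
        using repr_independence[OF r(3) r(1) H(1)] coset_join2[OF _ H(1)] \<open>x \<in> carrier G\<close>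
        by simp
      then show False
        using rcos_self[OF r(1) H(1)] r(2) by simp
    qed
    ultimately show "x \<in> carrier G - H"
      by blast
  qed
  then have "openin T (carrier G - H)"
    using openin_rcos[OF H] by (metis (no_types, lifting) Diff_iff openin_Union imageE)
  then show ?thesis
    using subgroup.subset[OF H(1)] by (simp add: closedin_def)
qed

definition coset_topology :: "'a set \<Rightarrow> 'a set topology" where
  "coset_topology N = final_topology T (\<lambda>x. N #> x)"

lemma topspace_coset_topology [simp]: "topspace (coset_topology N) = rcosets N"
  by (auto simp: coset_topology_def topspace_final_topology RCOSETS_def)

lemma quotient_map_coset_topology: "quotient_map T (coset_topology N) (\<lambda>x. N #> x)"
  unfolding coset_topology_def by (rule quotient_map_final_topology)

lemma continuous_map_coset_topology: "continuous_map T (coset_topology N) (\<lambda>x. N #> x)"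
  by (rule quotient_imp_continuous_map[OF quotient_map_coset_topology])

lemma open_map_coset_topology:
  assumes N: "subgroup N G"
  shows "open_map T (coset_topology N) (\<lambda>x. N #> x)"
  unfolding open_map_def
proof (intro allI impI)
  fix A assume A: "openin T A"
  then have Ac: "A \<subseteq> carrier G"
    using openin_subset by fastforce
  have "{x \<in> carrier G. N #> x \<in> (\<lambda>x. N #> x) ` A} = (\<Union>n\<in>N. {x \<in> carrier G. inv n \<otimes> x \<in> A})"
  proof (intro equalityI subsetI)
    fix x assume "x \<in> {x \<in> carrier G. N #> x \<in> (\<lambda>x. N #> x) ` A}"
    then obtain a where x: "x \<in> carrier G" and a: "a \<in> A" "N #> x = N #> a"
      by blast
    then have ac: "a \<in> carrier G"
      using Ac by blast
    then have "x \<otimes> inv a \<in> N"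
      using rcos_eq_iff[OF N x] a(2) by blast
    moreover have "inv (x \<otimes> inv a) \<otimes> x = a"
      using x ac by (simp add: inv_mult_group m_assoc)
    ultimately show "x \<in> (\<Union>n\<in>N. {x \<in> carrier G. inv n \<otimes> x \<in> A})"
      using x a(1) by force
  next
    fix x assume "x \<in> (\<Union>n\<in>N. {x \<in> carrier G. inv n \<otimes> x \<in> A})"
    then obtain n where n: "n \<in> N" and x: "x \<in> carrier G" and nx: "inv n \<otimes> x \<in> A"
      by blast
    have nc: "n \<in> carrier G"
      using subgroup.mem_carrier[OF N n] .
    have "x \<otimes> inv (inv n \<otimes> x) = n"
      using nc x by (simp add: inv_mult_group m_assoc)
    then have "N #> x = N #> (inv n \<otimes> x)"
      using rcos_eq_iff[OF N x] nc x n by simp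
    then show "x \<in> {x \<in> carrier G. N #> x \<in> (\<lambda>x. N #> x) ` A}"
      using x nx by blast
  qed
  moreover have "openin T (\<Union>n\<in>N. {x \<in> carrier G. inv n \<otimes> x \<in> A})"
    using A subgroup.mem_carrier[OF N]
    by (intro openin_Union) (auto intro: openin_carrier_preimage continuous_map_mult_left)
  ultimately show "openin (coset_topology N) ((\<lambda>x. N #> x) ` A)"
    unfolding coset_topology_def openin_final_topology using Ac by auto
qed

lemma compact_space_coset_topology:
  assumes "compact_space T"
  shows "compact_space (coset_topology N)"
  using image_compactin[OF assms[unfolded compact_space_def] continuous_map_coset_topology]
    quotient_imp_surjective_map[OF quotient_map_coset_topology]
  by (simp add: compact_space_def)

lemma topological_group_FactGroup:
  assumes N: "N \<lhd> G"
  shows "topological_group (G Mod N) (coset_topology N)"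
  unfolding topological_group_def
proof (intro conjI)
  have Ns: "subgroup N G"
    using N normal_imp_subgroup by blast
  let ?q = "\<lambda>x. N #> x"
  show "group (G Mod N)"
    by (rule normal.factorgroup_is_group[OF N])
  show "topspace (coset_topology N) = carrier (G Mod N)"
    by (simp add: FactGroup_def)
  have "quotient_map (prod_topology T T) (prod_topology (coset_topology N) (coset_topology N))
      (\<lambda>(x, y). (?q x, ?q y))"
  proof (rule continuous_open_imp_quotient_map)
    show "continuous_map (prod_topology T T) (prod_topology (coset_topology N) (coset_topology N))
        (\<lambda>(x, y). (?q x, ?q y))"
      by (simp add: continuous_map_prod_top continuous_map_coset_topology)
    show "open_map (prod_topology T T) (prod_topology (coset_topology N) (coset_topology N))
        (\<lambda>(x, y). (?q x, ?q y))"
      by (intro open_map_prod_map open_map_coset_topology Ns)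
    show "(\<lambda>(x, y). (?q x, ?q y)) ` topspace (prod_topology T T) =
        topspace (prod_topology (coset_topology N) (coset_topology N))"
      by (auto simp: RCOSETS_def)
  qed
  moreover have "continuous_map (prod_topology T T) (coset_topology N) (?q \<circ> (\<lambda>(x, y). x \<otimes> y))"
    by (rule continuous_map_compose[OF continuous_map_mult continuous_map_coset_topology])
  then have "continuous_map (prod_topology T T) (coset_topology N)
      ((\<lambda>(C, D). C <#> D) \<circ> (\<lambda>(x, y). (?q x, ?q y)))"
    by (rule continuous_map_eq) (auto simp: normal.rcos_sum[OF N])
  ultimately show "continuous_map (prod_topology (coset_topology N) (coset_topology N))
      (coset_topology N) (\<lambda>(C, D). C \<otimes>\<^bsub>G Mod N\<^esub> D)"
    using continuous_compose_quotient_map by fastforce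
  have "continuous_map T (coset_topology N) (?q \<circ> (\<lambda>x. inv x))"
    by (rule continuous_map_compose[OF continuous_map_inv continuous_map_coset_topology])
  then have "continuous_map T (coset_topology N) ((\<lambda>C. inv\<^bsub>G Mod N\<^esub> C) \<circ> ?q)"
    by (rule continuous_map_eq)
      (simp add: normal.inv_FactGroup[OF N] normal.rcos_inv[OF N] carrier_FactGroup)
  then show "continuous_map (coset_topology N) (coset_topology N) (\<lambda>C. inv\<^bsub>G Mod N\<^esub> C)"
    by (rule continuous_compose_quotient_map[OF quotient_map_coset_topology])
qed

lemma Hausdorff_coset_topology:
  assumes N: "subgroup N G"
    and separating: "\<And>z. z \<in> carrier G \<Longrightarrow> z \<notin> N \<Longrightarrow>
                        \<exists>H. subgroup H G \<and> openin T H \<and> N \<subseteq> H \<and> z \<notin> H"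
  shows "Hausdorff_space (coset_topology N)"
  unfolding Hausdorff_space_def
proof (intro allI impI)
  fix C D
  assume "C \<in> topspace (coset_topology N) \<and> D \<in> topspace (coset_topology N) \<and> C \<noteq> D"
  then obtain a b where ab: "a \<in> carrier G" "b \<in> carrier G" "C = N #> a" "D = N #> b"
    and ne: "N #> a \<noteq> N #> b"
    by (auto simp: RCOSETS_def)
  then have "a \<otimes> inv b \<notin> N"
    using rcos_eq_iff[OF N] by blast
  then obtain H where H: "subgroup H G" "openin T H" "N \<subseteq> H" "a \<otimes> inv b \<notin> H"
    using separating ab by blast
  let ?A = "(\<lambda>x. N #> x) ` (H #> a)" and ?B = "(\<lambda>x. N #> x) ` (H #> b)"
  have "openin (coset_topology N) ?A" "openin (coset_topology N) ?B"
    using open_map_coset_topology[OF N] openin_rcos[OF H(1,2)] ab(1,2)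
    unfolding open_map_def by blast+
  moreover have "C \<in> ?A" "D \<in> ?B"
    using ab rcos_self[OF _ H(1)] by auto
  moreover have "disjnt ?A ?B"
  proof -
    have "H #> a = H #> b"
      if z: "z1 \<in> H #> a" "z2 \<in> H #> b" and eq: "N #> z1 = N #> z2" for z1 z2
    proof -
      have zc: "z1 \<in> carrier G" "z2 \<in> carrier G"
        using z ab subgroup.elemrcos_carrier[OF H(1) is_group] by blast+
      have "H #> z1 = H #> z2"
        using eq H(3) rcos_eq_iff[OF N zc] rcos_eq_iff[OF H(1) zc] by blast
      then show ?thesis
        using repr_independence[OF z(1) ab(1) H(1)] repr_independence[OF z(2) ab(2) H(1)] by simp
    qed
    then show ?thesis
      using H(4) rcos_eq_iff[OF H(1) ab(1,2)] by (auto simp: disjnt_def)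
  qed
  ultimately show "\<exists>U V. openin (coset_topology N) U \<and> openin (coset_topology N) V \<and>
                         C \<in> U \<and> D \<in> V \<and> disjnt U V"
    by blast
qed

lemma continuous_map_set_mult_coset_topology:
  assumes "subgroup M G" "subgroup N G" "M \<subseteq> N"
  shows "continuous_map (coset_topology M) (coset_topology N) (\<lambda>C. N <#> C)"
proof (rule continuous_compose_quotient_map[OF quotient_map_coset_topology])
  show "continuous_map T (coset_topology N) ((\<lambda>C. N <#> C) \<circ> (\<lambda>x. M #> x))"
    using continuous_map_coset_topology
    by (rule continuous_map_eq) (simp add: set_mult_rcos_subgroup[OF assms])
qed

lemma topgroup_automorphism_inv_into:
  assumes "topgroup_automorphism G T f"
  shows "topgroup_automorphism G T (inv_into (carrier G) f)"
proof -
  have "homeomorphic_maps T T f (inv_into (carrier G) f)"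
    using homeomorphic_maps_inv_into[of T T f] assms by (simp add: topgroup_automorphism_def)
  then show ?thesis
    using assms iso_set_sym
    by (simp add: topgroup_automorphism_def homeomorphic_maps_map)
qed

lemma topgroup_automorphism_aut_power:
  assumes f: "topgroup_automorphism G T f"
  shows "topgroup_automorphism G T (aut_power G f k)"
proof -
  have "topgroup_automorphism G T (g ^^ n)" if g: "topgroup_automorphism G T g" for g n
  proof (induction n)
    case 0
    have "homeomorphic_map T T (\<lambda>x. x)"
      using homeomorphic_map_id[of T T] by (simp add: id_def)
    then show ?case
      by (simp add: topgroup_automorphism_def iso_set_refl id_def)
  next
    case (Suc n)
    have "g \<circ> g ^^ n \<in> iso G G" "homeomorphic_map T T (g \<circ> g ^^ n)"
      using Suc.IH g iso_set_trans homeomorphic_map_compose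
      unfolding topgroup_automorphism_def by blast+
    then show ?case
      unfolding topgroup_automorphism_def funpow.simps(2) by blast
  qed
  then show ?thesis
    using f topgroup_automorphism_inv_into[OF f] by (simp add: aut_power_def)
qed

lemma continuous_map_image_coset_topology:
  assumes h: "h \<in> hom G G" "continuous_map T T h" and N: "N \<subseteq> carrier G" "h ` N = N"
  shows "continuous_map (coset_topology N) (coset_topology N) (\<lambda>C. h ` C)"
proof (rule continuous_compose_quotient_map[OF quotient_map_coset_topology])
  have "continuous_map T (coset_topology N) ((\<lambda>x. N #> x) \<circ> h)"
    by (rule continuous_map_compose[OF h(2) continuous_map_coset_topology])
  then show "continuous_map T (coset_topology N) ((\<lambda>C. h ` C) \<circ> (\<lambda>x. N #> x))"
    by (rule continuous_map_eq) (simp add: image_rcos_hom[OF h(1) N(1)] N(2))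
qed

lemma topgroup_automorphism_FactGroup:
  assumes f: "topgroup_automorphism G T f" and N: "N \<lhd> G" and fN: "f ` N = N"
  shows "topgroup_automorphism (G Mod N) (coset_topology N) (\<lambda>C. f ` C)"
proof -
  define g where "g = inv_into (carrier G) f"
  have Nc: "N \<subseteq> carrier G"
    using N normal_imp_subgroup subgroup.subset by blast
  have f_bij: "inj_on f (carrier G)" "f ` carrier G = carrier G"
    using f by (simp_all add: topgroup_automorphism_def iso_def bij_betw_def)
  have gN: "g ` N = N"
    using inv_into_image_cancel[OF f_bij(1) Nc] fN by (simp add: g_def)
  have cont: "continuous_map (coset_topology N) (coset_topology N) (\<lambda>C. h ` C)"
    if "topgroup_automorphism G T h" "h ` N = N" for h
    using that continuous_map_image_coset_topology[OF _ _ Nc]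
    by (simp add: topgroup_automorphism_def iso_def homeomorphic_imp_continuous_map)
  have "g ` f ` C = C" "f ` g ` C = C" if "C \<in> rcosets N" for C
    using subgroup.rcosets_carrier[OF normal_imp_subgroup[OF N] is_group that] f_bij
    by (simp_all add: g_def image_inv_into_cancel)
  then have "homeomorphic_maps (coset_topology N) (coset_topology N) (\<lambda>C. f ` C) (\<lambda>C. g ` C)"
    unfolding homeomorphic_maps_def
    using cont[OF f fN] cont[OF topgroup_automorphism_inv_into[OF f, folded g_def] gN] by simp
  then have homeo: "homeomorphic_map (coset_topology N) (coset_topology N) (\<lambda>C. f ` C)"
    using homeomorphic_maps_map by blast
  then have "bij_betw (\<lambda>C. f ` C) (carrier (G Mod N)) (carrier (G Mod N))"
    unfolding bij_betw_def
    using homeomorphic_imp_surjective_map[OF homeo] homeomorphic_imp_injective_map[OF homeo]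
    by (simp add: FactGroup_def)
  moreover have "(\<lambda>C. f ` C) \<in> hom (G Mod N) (G Mod N)"
    using image_FactGroup_hom[OF _ N fN] f by (simp add: topgroup_automorphism_def iso_def)
  ultimately show ?thesis
    using homeo by (simp add: topgroup_automorphism_def iso_def)
qed

end

section \<open>Compact groups\<close>

locale compact_topgroup = topgroup +
  assumes compact: "compact_space T" and Hausdorff: "Hausdorff_space T"
begin

lemma openin_normal_core:
  assumes H: "subgroup H G" "openin T H"
  shows "openin T (normal_core H)"
proof -
  have "carrier G \<subseteq> \<Union>((\<lambda>r. H #> r) ` carrier G)"
    using rcos_self[OF _ H(1)] by blast
  moreover have "\<forall>U \<in> (\<lambda>r. H #> r) ` carrier G. openin T U"
    using openin_rcos[OF H] by blast
  ultimately obtain \<F> where "finite \<F>" "\<F> \<subseteq> (\<lambda>r. H #> r) ` carrier G" "carrier G \<subseteq> \<Union>\<F>"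
    using compact_space_alt[THEN iffD1, OF compact, THEN spec[of _ "(\<lambda>r. H #> r) ` carrier G"]]
    by auto
  then obtain R where R: "finite R" "R \<subseteq> carrier G" "carrier G \<subseteq> (\<Union>r\<in>R. H #> r)"
    by (metis finite_subset_image)
  have "openin T (carrier G \<inter> (\<Inter>r\<in>R. {x \<in> carrier G. r \<otimes> x \<otimes> inv r \<in> H}))"
  proof (rule openin_Int_Inter)
    show "finite ((\<lambda>r. {x \<in> carrier G. r \<otimes> x \<otimes> inv r \<in> H}) ` R)"
      using R(1) by simp
  qed (use R(2) H(2) openin_topspace[of T] in
      \<open>auto intro!: openin_carrier_preimage
        continuous_map_compose[OF continuous_map_mult_left continuous_map_mult_right, unfolded o_def]\<close>)
  then show ?thesis
    using normal_core_eq_Inter[OF H(1) R(2,3)] by simp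
qed

lemma open_normal_subgroup_le:
  assumes "subgroup H G" "openin T H"
  shows "\<exists>U. U \<lhd> G \<and> openin T U \<and> U \<subseteq> H"
  using normal_core_normal normal_core_subset openin_normal_core assms by blast

text \<open>By the tube lemma \<open>C \<otimes> W \<subseteq> C\<close> for some open \<open>W \<ni> \<one>\<close>; then the symmetric
  neighbourhood \<open>W \<inter> W\<inverse>\<close> of \<open>\<one>\<close> lies in the stabilizer of \<open>C\<close>.\<close>

lemma openin_rcos_stabilizer:
  assumes C: "closedin T C" "openin T C"
  shows "openin T {x \<in> carrier G. C #> x = C}"
proof -
  have Cc: "C \<subseteq> carrier G"
    using openin_subset[OF C(2)] by simp
  define S where "S = {p \<in> topspace (prod_topology T T). (\<lambda>(x, y). x \<otimes> y) p \<in> C}"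
  have S_open: "openin (prod_topology T T) S"
    unfolding S_def by (rule openin_continuous_map_preimage[OF continuous_map_mult C(2)])
  have "C \<times> {\<one>} \<subseteq> S"
    using Cc unfolding S_def by auto
  then obtain U W where UW: "openin T U" "openin T W" "C \<subseteq> U" "\<one> \<in> W" "U \<times> W \<subseteq> S"
    using tube_lemma_left[OF S_open closedin_compact_space[OF compact C(1)], of "\<one>"] by auto
  have CW: "c \<otimes> w \<in> C" if "c \<in> C" "w \<in> W" for c w
  proof -
    have "(c, w) \<in> S"
      using UW(3,5) that by blast
    then show ?thesis
      by (simp add: S_def)
  qed
  define W' where "W' = W \<inter> {w \<in> carrier G. inv w \<in> W}"
  have "openin T W'"
    unfolding W'_def by (intro openin_Int UW(2) openin_carrier_preimage[OF continuous_map_inv UW(2)])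
  moreover have "\<one> \<in> W'"
    using UW(4) by (simp add: W'_def)
  moreover have "W' \<subseteq> {x \<in> carrier G. C #> x = C}"
  proof
    fix w assume "w \<in> W'"
    then have w: "w \<in> carrier G" "w \<in> W" "inv w \<in> W"
      by (auto simp: W'_def)
    have "C #> w \<subseteq> C"
      using CW w(2) unfolding r_coset_def by auto
    moreover have "C \<subseteq> C #> w"
    proof
      fix c assume c: "c \<in> C"
      then have "c = (c \<otimes> inv w) \<otimes> w"
        using w(1) Cc by (auto simp: m_assoc)
      then show "c \<in> C #> w"
        using CW[OF c w(3)] unfolding r_coset_def by blast
    qed
    ultimately show "w \<in> {x \<in> carrier G. C #> x = C}"
      using w(1) by blast
  qed
  ultimately show ?thesis
    using openin_subgroup_neighbourhood[OF subgroup_rcos_stabilizer[OF Cc]] by blast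
qed

lemma open_subgroup_avoiding:
  assumes td: "totally_disconnected_space T" and z: "z \<in> carrier G" "z \<noteq> \<one>"
  shows "\<exists>H. subgroup H G \<and> openin T H \<and> z \<notin> H"
proof -
  obtain C where C: "closedin T C" "openin T C" "\<one> \<in> C" "z \<notin> C"
    using clopen_separating_points[OF compact Hausdorff td, of "\<one>" z] z by auto
  have Cc: "C \<subseteq> carrier G"
    using openin_subset[OF C(2)] by simp
  have "z \<in> C #> z"
    using rcosI[OF C(3) Cc z(1)] z(1) by simp
  then have "z \<notin> {x \<in> carrier G. C #> x = C}"
    using C(4) by blast
  then show ?thesis
    using subgroup_rcos_stabilizer[OF Cc] openin_rcos_stabilizer[OF C(1,2)]
    by (intro exI[of _ "{x \<in> carrier G. C #> x = C}"]) simp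
qed

end

section \<open>Cores of open normal subgroups under an automorphism\<close>

locale compact_topgroup_automorphism = compact_topgroup +
  fixes \<alpha> :: "'a \<Rightarrow> 'a"
  assumes automorphism: "topgroup_automorphism G T \<alpha>"
begin

lemma alpha_iso: "\<alpha> \<in> iso G G"
  using automorphism by (simp add: topgroup_automorphism_def)

lemma group_hom_aut_power: "group_hom G G (aut_power G \<alpha> k)"
  using iso_imp_homomorphism[OF aut_power_iso[OF alpha_iso]]
  by (simp add: group_hom_def group_hom_axioms_def is_group)

lemma aut_power_carrier [simp]: "x \<in> carrier G \<Longrightarrow> aut_power G \<alpha> k x \<in> carrier G"
  using group_hom.hom_closed[OF group_hom_aut_power] .

lemma aut_power_mult [simp]:
  "x \<in> carrier G \<Longrightarrow> y \<in> carrier G \<Longrightarrow> aut_power G \<alpha> k (x \<otimes> y) = aut_power G \<alpha> k x \<otimes> aut_power G \<alpha> k y"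
  using group_hom.hom_mult[OF group_hom_aut_power] .

lemma aut_power_inv [simp]: "x \<in> carrier G \<Longrightarrow> aut_power G \<alpha> k (inv x) = inv (aut_power G \<alpha> k x)"
  using group_hom.hom_inv[OF group_hom_aut_power] .

lemma aut_power_one [simp]: "aut_power G \<alpha> k \<one> = \<one>"
  using group_hom.hom_one[OF group_hom_aut_power] .

lemma aut_power_zero [simp]: "aut_power G \<alpha> 0 x = x"
  by (simp add: aut_power_def)

lemma continuous_map_aut_power: "continuous_map T T (aut_power G \<alpha> k)"
  using topgroup_automorphism_aut_power[OF automorphism]
  by (simp add: topgroup_automorphism_def homeomorphic_imp_continuous_map)

text \<open>Since \<open>\<alpha>\<close> is bijective this is \<open>\<Inter>\<^sub>k \<alpha>\<^sup>k(U)\<close>: the largest \<open>\<alpha>\<close>-invariant subset of \<open>U\<close>.\<close>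

definition aut_core :: "'a set \<Rightarrow> 'a set" where
  "aut_core U = {x \<in> carrier G. \<forall>k. aut_power G \<alpha> k x \<in> U}"

lemma aut_core_subset: "aut_core U \<subseteq> U"
  by (auto simp: aut_core_def dest: spec[of _ 0])

lemma aut_core_Int: "aut_core (U \<inter> V) = aut_core U \<inter> aut_core V"
  by (auto simp: aut_core_def)

lemma subgroup_aut_core:
  assumes U: "subgroup U G"
  shows "subgroup (aut_core U) G"
  by (rule subgroupI)
    (use U in \<open>auto simp: aut_core_def subgroup.one_closed subgroup.m_closed subgroup.m_inv_closed\<close>)

lemma aut_core_normal:
  assumes U: "U \<lhd> G"
  shows "aut_core U \<lhd> G"
  unfolding normal_inv_iff
proof (intro conjI ballI)
  show "subgroup (aut_core U) G"
    using subgroup_aut_core[OF normal_imp_subgroup[OF U]] .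
next
  fix x h assume x: "x \<in> carrier G" and h: "h \<in> aut_core U"
  then have "aut_power G \<alpha> k (x \<otimes> h \<otimes> inv x) \<in> U" for k
    using U by (auto simp: aut_core_def normal_inv_iff)
  then show "x \<otimes> h \<otimes> inv x \<in> aut_core U"
    using x h by (auto simp: aut_core_def)
qed

lemma closedin_aut_core:
  assumes "subgroup U G" "openin T U"
  shows "closedin T (aut_core U)"
proof -
  have "aut_core U = (\<Inter>k. {x \<in> carrier G. aut_power G \<alpha> k x \<in> U})"
    by (auto simp: aut_core_def)
  moreover have "closedin T {x \<in> carrier G. aut_power G \<alpha> k x \<in> U}" for k
    by (rule closedin_carrier_preimage[OF continuous_map_aut_power closedin_open_subgroup[OF assms]])
  ultimately show ?thesis
    using closedin_Inter[of "range (\<lambda>k. {x \<in> carrier G. aut_power G \<alpha> k x \<in> U})" T] by auto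
qed

lemma image_aut_core: "\<alpha> ` aut_core U = aut_core U"
proof (intro equalityI subsetI)
  fix y assume "y \<in> \<alpha> ` aut_core U"
  then obtain x where x: "x \<in> aut_core U" "y = \<alpha> x"
    by blast
  have xc: "x \<in> carrier G"
    using x(1) by (simp add: aut_core_def)
  have "aut_power G \<alpha> 1 x = \<alpha> x"
    using aut_power_succ[OF alpha_iso xc, of 0] by (simp add: aut_power_def)
  then have "aut_power G \<alpha> k (\<alpha> x) = aut_power G \<alpha> (k + 1) x" for k
    using aut_power_add[OF alpha_iso xc, of k 1] by simp
  then show "y \<in> aut_core U"
    using x hom_in_carrier[OF iso_imp_homomorphism[OF alpha_iso]] by (auto simp: aut_core_def)
next
  fix y assume y: "y \<in> aut_core U"
  then have yc: "y \<in> carrier G"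
    by (simp add: aut_core_def)
  have "aut_power G \<alpha> k (aut_power G \<alpha> (-1) y) = aut_power G \<alpha> (k - 1) y" for k
    using aut_power_add[OF alpha_iso yc] by simp
  then have "aut_power G \<alpha> (-1) y \<in> aut_core U"
    using y by (simp add: aut_core_def)
  moreover have "\<alpha> (aut_power G \<alpha> (-1) y) = y"
    using aut_power_succ[OF alpha_iso yc, of "-1"] by (simp add: aut_power_def)
  ultimately show "y \<in> \<alpha> ` aut_core U"
    by (rule rev_image_eqI[OF _ sym])
qed

lemma Hausdorff_aut_core:
  assumes U: "subgroup U G" "openin T U"
  shows "Hausdorff_space (coset_topology (aut_core U))"
proof (rule Hausdorff_coset_topology)
  show "subgroup (aut_core U) G"
    using subgroup_aut_core[OF U(1)] .
next
  fix z assume z: "z \<in> carrier G" "z \<notin> aut_core U"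
  then obtain k where "aut_power G \<alpha> k z \<notin> U"
    by (auto simp: aut_core_def)
  moreover have "subgroup {x \<in> carrier G. aut_power G \<alpha> k x \<in> U} G"
    using group_hom.subgroup_vimage[OF group_hom_aut_power U(1)] .
  moreover have "openin T {x \<in> carrier G. aut_power G \<alpha> k x \<in> U}"
    using openin_carrier_preimage[OF continuous_map_aut_power U(2)] .
  moreover have "aut_core U \<subseteq> {x \<in> carrier G. aut_power G \<alpha> k x \<in> U}"
    by (auto simp: aut_core_def)
  ultimately show "\<exists>H. subgroup H G \<and> openin T H \<and> aut_core U \<subseteq> H \<and> z \<notin> H"
    by blast
qed

lemma compact_group_aut_core:
  assumes "U \<lhd> G" "openin T U"
  shows "compact_group (G Mod aut_core U) (coset_topology (aut_core U))"
  unfolding compact_group_def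
  using topological_group_FactGroup[OF aut_core_normal] compact_space_coset_topology[OF compact]
    Hausdorff_aut_core[OF normal_imp_subgroup] assms
  by blast

lemma topgroup_automorphism_aut_core:
  assumes "U \<lhd> G"
  shows "topgroup_automorphism (G Mod aut_core U) (coset_topology (aut_core U)) (\<lambda>C. \<alpha> ` C)"
  using topgroup_automorphism_FactGroup[OF automorphism aut_core_normal[OF assms] image_aut_core] .

lemma mem_aut_core_if_rcos:
  assumes U: "subgroup U G" and c: "c \<in> carrier G"
    and rcos: "\<And>m. \<exists>u\<in>U. aut_core U #> c = aut_core U #> aut_power G \<alpha> m u"
  shows "c \<in> aut_core U"
proof -
  have "aut_power G \<alpha> m c \<in> U" for m
  proof -
    obtain u where u: "u \<in> U" "aut_core U #> c = aut_core U #> aut_power G \<alpha> (- m) u"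
      using rcos by blast
    have uc: "u \<in> carrier G"
      using u(1) subgroup.mem_carrier[OF U] by blast
    have "c \<otimes> inv (aut_power G \<alpha> (- m) u) \<in> aut_core U"
      using rcos_eq_iff[OF subgroup_aut_core[OF U] c aut_power_carrier[OF uc]] u(2) by blast
    then have "aut_power G \<alpha> m (c \<otimes> inv (aut_power G \<alpha> (- m) u)) \<in> U"
      by (simp add: aut_core_def)
    then have "aut_power G \<alpha> m c \<otimes> inv u \<in> U"
      using c uc aut_power_add[OF alpha_iso uc, of m "- m"] by simp
    then have "aut_power G \<alpha> m c \<otimes> inv u \<otimes> u \<in> U"
      using subgroup.m_closed[OF U _ u(1)] by blast
    then show ?thesis
      using c uc by (simp add: m_assoc)
  qed
  then show ?thesis
    using c by (simp add: aut_core_def)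
qed

lemma Inter_aut_power_images_aut_core:
  assumes U: "U \<lhd> G"
  shows "(\<Inter>k. aut_power (G Mod aut_core U) (\<lambda>C. \<alpha> ` C) k ` (\<lambda>x. aut_core U #> x) ` U) =
    {aut_core U}"
proof -
  let ?N = "aut_core U" and ?V = "(\<lambda>x. aut_core U #> x) ` U"
  let ?a = "aut_power (G Mod aut_core U) (\<lambda>C. \<alpha> ` C)"
  have Us: "subgroup U G" and N: "?N \<lhd> G" and Ns: "subgroup ?N G"
    using U aut_core_normal normal_imp_subgroup by blast+
  have power: "?a k (?N #> x) = ?N #> aut_power G \<alpha> k x" if "x \<in> carrier G" for k x
    using aut_power_FactGroup[OF alpha_iso N image_aut_core that] .
  have "E = ?N" if E: "E \<in> (\<Inter>k. ?a k ` ?V)" for E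
  proof -
    have "E \<in> ?a 0 ` ?V"
      using E by blast
    then obtain c where c: "c \<in> U" "E = ?N #> c"
      by (auto simp: aut_power_def)
    have cc: "c \<in> carrier G"
      using c(1) subgroup.mem_carrier[OF Us] by blast
    have "\<exists>u\<in>U. ?N #> c = ?N #> aut_power G \<alpha> m u" for m
    proof -
      have "E \<in> ?a m ` ?V"
        using E by blast
      then obtain u where "u \<in> U" "E = ?a m (?N #> u)"
        by blast
      then show ?thesis
        using c(2) power subgroup.mem_carrier[OF Us] by auto
    qed
    then have "c \<in> ?N"
      by (rule mem_aut_core_if_rcos[OF Us cc])
    then show ?thesis
      using c(2) subgroup.rcos_const[OF Ns is_group] by simp
  qed
  moreover have "?N \<in> ?a k ` ?V" for k
  proof -
    have "?N = ?a k (?N #> \<one>)"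
      using power[OF one_closed, of k] coset_mult_one[OF subgroup.subset[OF Ns]] by simp
    moreover have "?N #> \<one> \<in> ?V"
      using subgroup.one_closed[OF Us] by blast
    ultimately show ?thesis
      by blast
  qed
  ultimately show ?thesis
    by (intro equalityI subsetI) auto
qed

lemma finite_depth_aut_core:
  assumes U: "U \<lhd> G" "openin T U"
  shows "finite_depth (G Mod aut_core U) (coset_topology (aut_core U)) (\<lambda>C. \<alpha> ` C)"
  unfolding finite_depth_def
proof (intro exI conjI)
  let ?N = "aut_core U" and ?V = "(\<lambda>x. aut_core U #> x) ` U"
  have N: "?N \<lhd> G"
    using U(1) by (rule aut_core_normal)
  show "subgroup ?V (G Mod ?N)"
    using group_hom.subgroup_img_is_subgroup[of G "G Mod ?N" "\<lambda>x. ?N #> x" U]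
      normal_imp_subgroup[OF U(1)] normal.r_coset_hom_Mod[OF N] normal.factorgroup_is_group[OF N]
    by (simp add: group_hom_def group_hom_axioms_def is_group)
  show "openin (coset_topology ?N) ?V"
    using open_map_coset_topology[OF normal_imp_subgroup[OF N]] U(2) unfolding open_map_def by blast
  show "(\<Inter>k. aut_power (G Mod ?N) (\<lambda>C. \<alpha> ` C) k ` ?V) = {\<one>\<^bsub>G Mod ?N\<^esub>}"
    using Inter_aut_power_images_aut_core[OF U(1)] by simp
qed

section \<open>The inverse limit\<close>

definition core_index :: "'a set set" where
  "core_index = {aut_core U | U. U \<lhd> G \<and> openin T U}"

lemma core_indexE:
  assumes "N \<in> core_index"
  obtains U where "U \<lhd> G" "openin T U" "N = aut_core U"
  using assms unfolding core_index_def by blast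

lemma core_index_normal: "N \<in> core_index \<Longrightarrow> N \<lhd> G"
  by (auto elim: core_indexE intro: aut_core_normal)

lemma core_index_subgroup: "N \<in> core_index \<Longrightarrow> subgroup N G"
  using core_index_normal normal_imp_subgroup by blast

lemma closedin_core_index: "N \<in> core_index \<Longrightarrow> closedin T N"
  by (auto elim!: core_indexE intro: closedin_aut_core normal_imp_subgroup)

lemma image_rcos_core_index:
  assumes "N \<in> core_index" "x \<in> carrier G"
  shows "\<alpha> ` (N #> x) = N #> \<alpha> x"
  using assms image_rcos_hom[OF iso_imp_homomorphism[OF alpha_iso]] image_aut_core
    subgroup.subset[OF core_index_subgroup]
  by (metis core_indexE)

lemma carrier_in_core_index: "carrier G \<in> core_index"
proof -
  have "aut_core (carrier G) = carrier G"
    by (auto simp: aut_core_def)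
  moreover have "carrier G \<lhd> G"
    by (simp add: normal_inv_iff subgroup_self)
  ultimately show ?thesis
    using openin_topspace[of T] unfolding core_index_def by force
qed

lemma core_index_Int:
  assumes "M \<in> core_index" "N \<in> core_index"
  shows "M \<inter> N \<in> core_index"
proof -
  obtain U V where "U \<lhd> G" "openin T U" "M = aut_core U" "V \<lhd> G" "openin T V" "N = aut_core V"
    using assms by (metis core_indexE)
  then show ?thesis
    unfolding core_index_def
    by (intro CollectI exI[of _ "U \<inter> V"]) (simp add: aut_core_Int normal_subgroup_intersect openin_Int)
qed

lemma directed_core_index: "directed_set core_index (\<lambda>N M. M \<subseteq> N)"
  unfolding directed_set_def using carrier_in_core_index core_index_Int by blast

lemma core_index_avoiding:
  assumes "totally_disconnected_space T" "z \<in> carrier G" "z \<noteq> \<one>"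
  shows "\<exists>N\<in>core_index. z \<notin> N"
proof -
  obtain H where H: "subgroup H G" "openin T H" "z \<notin> H"
    using open_subgroup_avoiding[OF assms] by blast
  obtain U where U: "U \<lhd> G" "openin T U" "U \<subseteq> H"
    using open_normal_subgroup_le[OF H(1,2)] by blast
  have "aut_core U \<in> core_index"
    using U(1,2) unfolding core_index_def by blast
  moreover have "z \<notin> aut_core U"
    using aut_core_subset U(3) H(3) by blast
  ultimately show ?thesis
    by blast
qed

lemma inverse_system_core_index:
  "inverse_system_aut core_index (\<lambda>N M. M \<subseteq> N) (\<lambda>N. G Mod N) coset_topology
     (\<lambda>N C. \<alpha> ` C) (\<lambda>N M C. N <#> C)"
  unfolding inverse_system_aut_def
proof (intro conjI ballI impI)
  show "directed_set core_index (\<lambda>N M. M \<subseteq> N)"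
    by (rule directed_core_index)
next
  fix N assume "N \<in> core_index"
  then show "compact_group (G Mod N) (coset_topology N)"
    "topgroup_automorphism (G Mod N) (coset_topology N) (\<lambda>C. \<alpha> ` C)"
    by (auto elim!: core_indexE intro: compact_group_aut_core topgroup_automorphism_aut_core)
next
  fix N C assume N: "N \<in> core_index" and "C \<in> carrier (G Mod N)"
  then obtain x where "x \<in> carrier G" "C = N #> x"
    by (auto simp: carrier_FactGroup)
  then show "N <#> C = C"
    using set_mult_rcos_subgroup[OF core_index_subgroup[OF N] core_index_subgroup[OF N]] by simp
next
  fix N M assume N: "N \<in> core_index" and M: "M \<in> core_index" and MN: "M \<subseteq> N"
  note rcos = set_mult_rcos_subgroup[OF core_index_subgroup[OF M] core_index_subgroup[OF N] MN]
  show "(\<lambda>C. N <#> C) \<in> hom (G Mod M) (G Mod N)"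
    by (rule set_mult_FactGroup_hom[OF core_index_normal[OF M] core_index_normal[OF N] MN])
  show "continuous_map (coset_topology M) (coset_topology N) (\<lambda>C. N <#> C)"
    by (rule continuous_map_set_mult_coset_topology[OF core_index_subgroup[OF M]
          core_index_subgroup[OF N] MN])
  fix C assume "C \<in> carrier (G Mod M)"
  then obtain x where x: "x \<in> carrier G" "C = M #> x"
    by (auto simp: carrier_FactGroup)
  have "\<alpha> x \<in> carrier G"
    using hom_in_carrier[OF iso_imp_homomorphism[OF alpha_iso] x(1)] .
  then show "N <#> \<alpha> ` C = \<alpha> ` (N <#> C)"
    using x rcos image_rcos_core_index[OF M] image_rcos_core_index[OF N] by simp
next
  fix N M K assume N: "N \<in> core_index" and M: "M \<in> core_index" and K: "K \<in> core_index"
    and "M \<subseteq> N" "K \<subseteq> M"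
  then have KN: "K \<subseteq> N"
    by blast
  fix C assume "C \<in> carrier (G Mod K)"
  then obtain x where "x \<in> carrier G" "C = K #> x"
    by (auto simp: carrier_FactGroup)
  then show "N <#> (M <#> C) = N <#> C"
    using set_mult_rcos_subgroup[OF core_index_subgroup[OF K] core_index_subgroup[OF M] \<open>K \<subseteq> M\<close>]
      set_mult_rcos_subgroup[OF core_index_subgroup[OF M] core_index_subgroup[OF N] \<open>M \<subseteq> N\<close>]
      set_mult_rcos_subgroup[OF core_index_subgroup[OF K] core_index_subgroup[OF N] KN]
    by simp
qed

abbreviation coset_limit :: "('a set \<Rightarrow> 'a set) monoid" where
  "coset_limit \<equiv> inv_limit core_index (\<lambda>N M. M \<subseteq> N) (\<lambda>N. G Mod N) (\<lambda>N M C. N <#> C)"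

abbreviation coset_limit_topology :: "('a set \<Rightarrow> 'a set) topology" where
  "coset_limit_topology \<equiv>
     inv_limit_topology core_index (\<lambda>N M. M \<subseteq> N) (\<lambda>N. G Mod N) coset_topology (\<lambda>N M C. N <#> C)"

definition coset_thread :: "'a \<Rightarrow> 'a set \<Rightarrow> 'a set" where
  "coset_thread x = (\<lambda>N\<in>core_index. N #> x)"

lemma carrier_coset_limit:
  "carrier coset_limit = {f \<in> (\<Pi>\<^sub>E N\<in>core_index. rcosets N).
     \<forall>N\<in>core_index. \<forall>M\<in>core_index. M \<subseteq> N \<longrightarrow> N <#> f M = f N}"
  by (simp add: inv_limit_def FactGroup_def)

lemma coset_thread_carrier: "x \<in> carrier G \<Longrightarrow> coset_thread x \<in> carrier coset_limit"
  unfolding carrier_coset_limit coset_thread_def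
  using rcosetsI[OF subgroup.subset[OF core_index_subgroup]]
    set_mult_rcos_subgroup[OF core_index_subgroup core_index_subgroup]
  by auto

lemma coset_thread_hom: "coset_thread \<in> hom G coset_limit"
  unfolding hom_def
proof (intro CollectI conjI ballI)
  show "coset_thread \<in> carrier G \<rightarrow> carrier coset_limit"
    using coset_thread_carrier by blast
next
  fix x y assume "x \<in> carrier G" "y \<in> carrier G"
  then show "coset_thread (x \<otimes> y) = coset_thread x \<otimes>\<^bsub>coset_limit\<^esub> coset_thread y"
    unfolding coset_thread_def
    by (simp add: inv_limit_def normal.rcos_sum[OF core_index_normal] cong: restrict_cong)
qed

lemma inj_on_coset_thread:
  assumes td: "totally_disconnected_space T"
  shows "inj_on coset_thread (carrier G)"
proof (rule inj_onI)
  fix x y assume x: "x \<in> carrier G" and y: "y \<in> carrier G" and eq: "coset_thread x = coset_thread y"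
  have "x \<otimes> inv y \<in> N" if "N \<in> core_index" for N
    using fun_cong[OF eq, of N] that rcos_eq_iff[OF core_index_subgroup[OF that] x y]
    by (simp add: coset_thread_def)
  then have "x \<otimes> inv y = \<one>"
    using core_index_avoiding[OF td] x y by blast
  moreover have "x = (x \<otimes> inv y) \<otimes> y"
    using x y by (simp add: m_assoc)
  ultimately show "x = y"
    using y by simp
qed

lemma coset_limit_rcos:
  assumes "f \<in> carrier coset_limit" "N \<in> core_index"
  obtains a where "a \<in> carrier G" "f N = N #> a"
proof -
  have "f N \<in> rcosets N"
    using assms unfolding carrier_coset_limit by (auto simp: PiE_iff)
  then show ?thesis
    using that unfolding RCOSETS_def by blast
qed

lemma coset_limit_mono:
  assumes f: "f \<in> carrier coset_limit" and NM: "N \<in> core_index" "M \<in> core_index" "M \<subseteq> N"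
  shows "f M \<subseteq> f N"
proof
  fix y assume y: "y \<in> f M"
  obtain a where a: "a \<in> carrier G" "f M = M #> a"
    using coset_limit_rcos[OF f NM(2)] .
  have yc: "y \<in> carrier G"
    using y a subgroup.elemrcos_carrier[OF core_index_subgroup[OF NM(2)] is_group] by blast
  then have "\<one> \<otimes> y \<in> N <#> f M"
    using y subgroup.one_closed[OF core_index_subgroup[OF NM(1)]] unfolding set_mult_def by blast
  moreover have "N <#> f M = f N"
    using f NM unfolding carrier_coset_limit by blast
  ultimately show "y \<in> f N"
    using yc by simp
qed

lemma coset_limit_Inter_nonempty:
  assumes f: "f \<in> carrier coset_limit"
  shows "\<Inter>(f ` core_index) \<noteq> {}"
proof (rule compact_space_Inter_directed_closedin[OF compact])
  fix C assume "C \<in> f ` core_index"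
  then obtain N where N: "N \<in> core_index" "C = f N"
    by blast
  then obtain a where a: "a \<in> carrier G" "C = N #> a"
    using coset_limit_rcos[OF f] by metis
  show "closedin T C"
    using closedin_rcos[OF core_index_subgroup[OF N(1)] closedin_core_index[OF N(1)] a(1)] a(2)
    by simp
  show "C \<noteq> {}"
    using rcos_self[OF a(1) core_index_subgroup[OF N(1)]] a(2) by blast
next
  fix C D assume "C \<in> f ` core_index" "D \<in> f ` core_index"
  then obtain M N where MN: "M \<in> core_index" "N \<in> core_index" "C = f M" "D = f N"
    by blast
  have MN_index: "M \<inter> N \<in> core_index"
    using MN(1,2) by (rule core_index_Int)
  then have "f (M \<inter> N) \<subseteq> C \<inter> D"
    using coset_limit_mono[OF f MN(1)] coset_limit_mono[OF f MN(2)] MN(3,4) by blast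
  then show "\<exists>E\<in>f ` core_index. E \<subseteq> C \<inter> D"
    using MN_index by blast
qed

lemma coset_thread_surjective: "coset_thread ` carrier G = carrier coset_limit"
proof
  show "coset_thread ` carrier G \<subseteq> carrier coset_limit"
    using coset_thread_carrier by blast
next
  show "carrier coset_limit \<subseteq> coset_thread ` carrier G"
  proof
    fix f assume f: "f \<in> carrier coset_limit"
    obtain x where x: "x \<in> \<Inter>(f ` core_index)"
      using coset_limit_Inter_nonempty[OF f] by blast
    have rcos_x: "f N = N #> x" if N: "N \<in> core_index" for N
    proof -
      obtain a where a: "a \<in> carrier G" "f N = N #> a"
        using coset_limit_rcos[OF f N] .
      have "x \<in> N #> a"
        using x N a(2) by blast
      then show ?thesis
        using repr_independence[OF _ a(1) core_index_subgroup[OF N]] a(2) by simp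
    qed
    obtain a where "a \<in> carrier G" "f (carrier G) = carrier G #> a"
      using coset_limit_rcos[OF f carrier_in_core_index] .
    moreover have "x \<in> f (carrier G)"
      using x carrier_in_core_index by blast
    ultimately have "x \<in> carrier G"
      using r_coset_subset_G[OF subset_refl] by blast
    moreover have "f = coset_thread x"
      using f rcos_x
      by (auto simp: carrier_coset_limit coset_thread_def PiE_def extensional_def fun_eq_iff)
    ultimately show "f \<in> coset_thread ` carrier G"
      by blast
  qed
qed

lemma coset_thread_iso:
  assumes "totally_disconnected_space T"
  shows "coset_thread \<in> iso G coset_limit"
  using coset_thread_hom inj_on_coset_thread[OF assms] coset_thread_surjective
  by (simp add: iso_def bij_betw_def)

lemma homeomorphic_map_coset_thread:
  assumes td: "totally_disconnected_space T"
  shows "homeomorphic_map T coset_limit_topology coset_thread"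
proof (rule continuous_imp_homeomorphic_map)
  have "carrier coset_limit \<subseteq> topspace (product_topology coset_topology core_index)"
    by (auto simp: carrier_coset_limit)
  then have top: "topspace coset_limit_topology = carrier coset_limit"
    by (auto simp: inv_limit_topology_def)
  have "continuous_map T (product_topology coset_topology core_index) coset_thread"
    unfolding continuous_map_componentwise
    using continuous_map_coset_topology by (auto simp: coset_thread_def)
  then show "continuous_map T coset_limit_topology coset_thread"
    unfolding inv_limit_topology_def continuous_map_in_subtopology
    using coset_thread_carrier by auto
  show "compact_space T"
    by (rule compact)
  have "Hausdorff_space (product_topology coset_topology core_index)"
    using inverse_system_core_index
    by (auto simp: Hausdorff_space_product_topology inverse_system_aut_def compact_group_def)
  then show "Hausdorff_space coset_limit_topology"
    unfolding inv_limit_topology_def by (rule Hausdorff_space_subtopology)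
  show "coset_thread ` topspace T = topspace coset_limit_topology"
    using coset_thread_surjective top by simp
  show "inj_on coset_thread (topspace T)"
    using inj_on_coset_thread[OF td] by simp
qed

lemma coset_thread_automorphism:
  "x \<in> carrier G \<Longrightarrow> coset_thread (\<alpha> x) = inv_limit_aut core_index (\<lambda>N C. \<alpha> ` C) (coset_thread x)"
  unfolding coset_thread_def inv_limit_aut_def
  by (simp add: image_rcos_core_index cong: restrict_cong)

end

theorem proposition5p3:
  fixes G :: "('a, 'b) monoid_scheme" and T :: "'a topology" and \<alpha> :: "'a \<Rightarrow> 'a"
  assumes "compact_group G T"
    and "totally_disconnected_space T"
    and "topgroup_automorphism G T \<alpha>"
  shows "\<exists>(I :: 'a set set) (rel :: 'a set \<Rightarrow> 'a set \<Rightarrow> bool)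
            (Gs :: 'a set \<Rightarrow> 'a set monoid) (Ts :: 'a set \<Rightarrow> 'a set topology)
            (\<alpha>s :: 'a set \<Rightarrow> 'a set \<Rightarrow> 'a set) (\<phi> :: 'a set \<Rightarrow> 'a set \<Rightarrow> 'a set \<Rightarrow> 'a set).
           inverse_system_aut I rel Gs Ts \<alpha>s \<phi> \<and>
           (\<forall>i\<in>I. finite_depth (Gs i) (Ts i) (\<alpha>s i)) \<and>
           (\<exists>\<Phi>. \<Phi> \<in> iso G (inv_limit I rel Gs \<phi>) \<and>
                 homeomorphic_map T (inv_limit_topology I rel Gs Ts \<phi>) \<Phi> \<and>
                 (\<forall>x\<in>carrier G. \<Phi> (\<alpha> x) = inv_limit_aut I \<alpha>s (\<Phi> x)))"
proof -
  interpret compact_topgroup_automorphism G T \<alpha>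
    using assms(1,3)
    by (simp add: compact_topgroup_automorphism_def compact_topgroup_automorphism_axioms_def
        compact_topgroup_def compact_topgroup_axioms_def topgroup_def topgroup_axioms_def
        compact_group_def topological_group_def)
  have "\<forall>N\<in>core_index. finite_depth (G Mod N) (coset_topology N) (\<lambda>C. \<alpha> ` C)"
    by (auto elim!: core_indexE intro: finite_depth_aut_core)
  then show ?thesis
    using inverse_system_core_index coset_thread_iso[OF assms(2)]
      homeomorphic_map_coset_thread[OF assms(2)] coset_thread_automorphism
    by (intro exI[of _ core_index] exI[of _ "\<lambda>N M. M \<subseteq> N"] exI[of _ "\<lambda>N. G Mod N"]
        exI[of _ coset_topology] exI[of _ "\<lambda>N C. \<alpha> ` C"] exI[of _ "\<lambda>N M C. N <#>\<^bsub>G\<^esub> C"]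
        exI[of _ coset_thread] conjI) simp_all
qed

end
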